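(* Let $k\ge 2$ and let $G$ be a finite simple graph admitting a closed neighborhood balanced $k$-coloring $c$ with color classes $V_1,\dots,V_k$. If $|V_i|=|V_j|$ for some $i,j$, then $|E(V_i,V_i)|=|E(V_j,V_j)|$.
   Context: For a vertex $v$, $N[v]=\{v\}\cup\{u : uv\in E(G)\}$. A closed neighborhood balanced $k$-coloring of $G$ is a map $c: V(G)\to\{1,\dots,k\}$ such that for every vertex $v$ the numbers $|\{u\in N[v] : c(u)=i\}|$, $i=1,\dots,k$, are all equal; its color classes are $V_i=c^{-1}(i)$. $E(X,X)$ denotes the set of edges with both endpoints in $X$. *)

theory Defs
  imports Main
begin

definition simple_graph :: "'a set \<Rightarrow> 'a set set \<Rightarrow> bool" where
  "simple_graph V E \<longleftrightarrow> finite V \<and> (\<forall>e\<in>E. e \<subseteq> V \<and> card e = 2)"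

definition closed_nbhd :: "'a set \<Rightarrow> 'a set set \<Rightarrow> 'a \<Rightarrow> 'a set" where
  "closed_nbhd V E v = {v} \<union> {u \<in> V. {u, v} \<in> E}"

definition cnb_coloring :: "'a set \<Rightarrow> 'a set set \<Rightarrow> nat \<Rightarrow> ('a \<Rightarrow> nat) \<Rightarrow> bool" where
  "cnb_coloring V E k c \<longleftrightarrow>
     (\<forall>v\<in>V. c v \<in> {1..k}) \<and>
     (\<forall>v\<in>V. \<forall>i\<in>{1..k}. \<forall>j\<in>{1..k}.
        card {u \<in> closed_nbhd V E v. c u = i} = card {u \<in> closed_nbhd V E v. c u = j})"

definition color_class :: "'a set \<Rightarrow> ('a \<Rightarrow> nat) \<Rightarrow> nat \<Rightarrow> 'a set" where
  "color_class V c i = {v \<in> V. c v = i}"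

definition edges_within :: "'a set set \<Rightarrow> 'a set \<Rightarrow> 'a set set" where
  "edges_within E X = {e \<in> E. e \<subseteq> X}"

end

theory Submission
  imports Defs
begin

text \<open>For a vertex \<open>v\<close> of colour \<open>i\<close>, balance of \<open>N[v]\<close> between colours \<open>i\<close> and \<open>j\<close> says that
  \<open>v\<close> has exactly one more neighbour in \<open>V\<^sub>j\<close> than in \<open>V\<^sub>i\<close> (the extra one in \<open>N[v] \<inter> V\<^sub>i\<close> is \<open>v\<close>
  itself). Summing over \<open>v \<in> V\<^sub>i\<close> and using the handshake lemma inside \<open>V\<^sub>i\<close> gives
  \<open>2 |E(V\<^sub>i,V\<^sub>i)| + |V\<^sub>i| = e(V\<^sub>i,V\<^sub>j)\<close>, the number of edges between the two classes. The right-hand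
  side is symmetric in \<open>i\<close> and \<open>j\<close>, so equal class sizes force equal numbers of inner edges.\<close>

definition degree_in :: "'a set set \<Rightarrow> 'a set \<Rightarrow> 'a \<Rightarrow> nat" where
  "degree_in E X v = card {u \<in> X. {u, v} \<in> E}"

lemma sum_degree_in_swap:
  assumes "finite A" "finite B"
  shows "(\<Sum>v\<in>A. degree_in E B v) = (\<Sum>u\<in>B. degree_in E A u)"
  unfolding degree_in_def
proof (rule sum_multicount_gen[OF assms])
  show "\<forall>u\<in>B. card {v \<in> A. {u, v} \<in> E} = card {v \<in> A. {v, u} \<in> E}"
    by (simp add: insert_commute)
qed

lemma card_incident_edges_within:
  assumes "\<forall>e\<in>E. card e = 2" "v \<in> X"
  shows "card {e \<in> edges_within E X. v \<in> e} = degree_in E X v"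
proof -
  have "{e \<in> edges_within E X. v \<in> e} = (\<lambda>u. {u, v}) ` {u \<in> X. {u, v} \<in> E}"
  proof (intro equalityI subsetI)
    fix e assume e: "e \<in> {e \<in> edges_within E X. v \<in> e}"
    then obtain a b where "e = {a, b}" "a \<noteq> b"
      using assms(1) card_2_iff by (metis edges_within_def mem_Collect_eq)
    with e obtain u where "e = {u, v}" by (auto simp: insert_commute)
    with e show "e \<in> (\<lambda>u. {u, v}) ` {u \<in> X. {u, v} \<in> E}"
      by (auto simp: edges_within_def)
  qed (use assms(2) in \<open>auto simp: edges_within_def\<close>)
  moreover have "inj_on (\<lambda>u. {u, v}) {u \<in> X. {u, v} \<in> E}"
    by (rule inj_onI) (auto simp: doubleton_eq_iff)
  ultimately show ?thesis
    by (simp add: card_image degree_in_def)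
qed

lemma sum_degree_in_eq_twice_card_edges_within:
  assumes "finite X" "\<forall>e\<in>E. card e = 2"
  shows "(\<Sum>v\<in>X. degree_in E X v) = 2 * card (edges_within E X)"
proof -
  have "edges_within E X \<subseteq> Pow X"
    by (auto simp: edges_within_def)
  then have fin: "finite (edges_within E X)"
    using assms(1) by (simp add: finite_subset)
  have "(\<Sum>v\<in>X. degree_in E X v) = (\<Sum>v\<in>X. card {e \<in> edges_within E X. v \<in> e})"
    using assms(2) by (simp add: card_incident_edges_within)
  also have "\<dots> = 2 * card (edges_within E X)"
  proof (rule sum_multicount[OF assms(1) fin])
    have "{v \<in> X. v \<in> e} = e" if "e \<in> edges_within E X" for e
      using that by (auto simp: edges_within_def)
    then show "\<forall>e\<in>edges_within E X. card {v \<in> X. v \<in> e} = 2"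
      using assms(2) by (simp add: edges_within_def)
  qed
  finally show ?thesis .
qed

lemma degree_in_other_class:
  assumes "simple_graph V E" "cnb_coloring V E k c" "i \<in> {1..k}" "j \<in> {1..k}" "i \<noteq> j"
    and v: "v \<in> color_class V c i"
  shows "degree_in E (color_class V c j) v = Suc (degree_in E (color_class V c i) v)"
proof -
  let ?Ni = "{u \<in> color_class V c i. {u, v} \<in> E}"
  have "{v, v} \<notin> E"
    using assms(1) by (auto simp: simple_graph_def)
  then have "v \<notin> ?Ni"
    by simp
  moreover have "finite ?Ni"
    using assms(1) by (simp add: simple_graph_def color_class_def)
  ultimately have "card (insert v ?Ni) = Suc (degree_in E (color_class V c i) v)"
    by (simp add: degree_in_def)
  moreover have "{u \<in> closed_nbhd V E v. c u = i} = insert v ?Ni"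
    using v by (auto simp: closed_nbhd_def color_class_def)
  moreover have "{u \<in> closed_nbhd V E v. c u = j} = {u \<in> color_class V c j. {u, v} \<in> E}"
    using v \<open>i \<noteq> j\<close> by (auto simp: closed_nbhd_def color_class_def)
  moreover have "card {u \<in> closed_nbhd V E v. c u = j} = card {u \<in> closed_nbhd V E v. c u = i}"
    using assms(2-4) v unfolding cnb_coloring_def color_class_def by blast
  ultimately show ?thesis
    by (simp add: degree_in_def)
qed

lemma sum_degree_in_other_class:
  assumes "simple_graph V E" "cnb_coloring V E k c" "i \<in> {1..k}" "j \<in> {1..k}" "i \<noteq> j"
  shows "(\<Sum>v\<in>color_class V c i. degree_in E (color_class V c j) v)
    = 2 * card (edges_within E (color_class V c i)) + card (color_class V c i)"
proof -
  let ?Vi = "color_class V c i"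
  have "finite ?Vi" "\<forall>e\<in>E. card e = 2"
    using assms(1) by (auto simp: simple_graph_def color_class_def)
  have "(\<Sum>v\<in>?Vi. degree_in E (color_class V c j) v) = (\<Sum>v\<in>?Vi. Suc (degree_in E ?Vi v))"
    using degree_in_other_class[OF assms] by simp
  also have "\<dots> = (\<Sum>v\<in>?Vi. degree_in E ?Vi v) + card ?Vi"
    unfolding Suc_eq_plus1 sum.distrib by simp
  also have "\<dots> = 2 * card (edges_within E ?Vi) + card ?Vi"
    using sum_degree_in_eq_twice_card_edges_within[OF \<open>finite ?Vi\<close> \<open>\<forall>e\<in>E. card e = 2\<close>] by simp
  finally show ?thesis .
qed

theorem corollary2p9:
  fixes V :: "'a set" and E :: "'a set set" and k :: nat and c :: "'a \<Rightarrow> nat" and i j :: nat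
  assumes "k \<ge> 2"
    and "simple_graph V E"
    and "cnb_coloring V E k c"
    and "i \<in> {1..k}" and "j \<in> {1..k}"
    and "card (color_class V c i) = card (color_class V c j)"
  shows "card (edges_within E (color_class V c i)) = card (edges_within E (color_class V c j))"
proof (cases "i = j")
  case False
  have "finite (color_class V c i)" "finite (color_class V c j)"
    using assms(2) by (auto simp: simple_graph_def color_class_def)
  then have "(\<Sum>v\<in>color_class V c i. degree_in E (color_class V c j) v)
      = (\<Sum>v\<in>color_class V c j. degree_in E (color_class V c i) v)"
    by (rule sum_degree_in_swap)
  then show ?thesis
    using sum_degree_in_other_class[OF assms(2-5) False]
      sum_degree_in_other_class[OF assms(2,3,5,4)] False assms(6)
    by simp
qed simp

end
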